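(* Let $\mathcal{M}=(S,A,\delta)$ be a finite fuzzy transition system with discounting factor $\gamma\in(0,1)$, let $\epsilon\in(0,1]$, and let $N=\lceil \log\epsilon/\log\gamma\rceil$. Then $\|\Delta^N(d_0)-d^\gamma_f\|\le\epsilon$, where $d_0=\bot$ is the constant-zero function on $S\times S$ and $\|e\|=\max_{s,t\in S}|e(s,t)|$.
   Context: A fuzzy set on a finite set $X$ is a map $\mu:X\to[0,1]$; $\mathcal{F}(X)$ is the set of fuzzy sets on $X$; $\mu(U)=\max_{x\in U}\mu(x)$. A fuzzy transition system is $\mathcal{M}=(S,A,\delta)$ with $S,A$ finite and $\delta:S\times A\to\mathcal{P}(\mathcal{F}(S))$, each $\delta(s,a)$ finite. $\mathcal{D}(S)$ is the set of pseudo-ultrametrics $d:S\times S\to[0,1]$, ordered pointwise. Lifting: $\hat d(\mu,\eta)=1$ if $\mu(S)\ne\eta(S)$, and otherwise $\hat d(\mu,\eta)$ is the minimum of $\max_{u,v}\min(d(u,v),x_{uv})$ over $x_{uv}\ge0$ with $\max_v x_{uv}=\mu(u)$ for all $u$ and $\max_u x_{uv}=\eta(v)$ for all $v$. For finite $Z\subseteq\mathcal{F}(S)$: $\hat d(\mu,Z)=\min_{\eta\in Z}\hat d(\mu,\eta)$ if $Z\ne\emptyset$, else $1$. Hausdorff distance: $H_{\hat d}(\emptyset,\emptyset)=0$, otherwise $H_{\hat d}(Y,Z)=\max(\max_{\mu\in Y}\hat d(\mu,Z),\max_{\eta\in Z}\hat d(\eta,Y))$. $\Delta(d)(s,t)=\gamma\cdot\max_{a\in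 A}H_{\hat d}(\delta(s,a),\delta(t,a))$ is a monotone map $\mathcal{D}(S)\to\mathcal{D}(S)$, and the behavioural distance $d^\gamma_f$ is its least fixpoint. *)

theory Defs
  imports Complex_Main
begin

text \<open>States are the finite type 'a, actions the finite type 'b.
A fuzzy set on the states is a function 'a \<Rightarrow> real with values in [0,1].\<close>

definition is_fuzzy :: "('a::finite \<Rightarrow> real) \<Rightarrow> bool" where
  "is_fuzzy \<mu> \<longleftrightarrow> (\<forall>x. 0 \<le> \<mu> x \<and> \<mu> x \<le> 1)"

definition fz_height :: "('a::finite \<Rightarrow> real) \<Rightarrow> real" where
  "fz_height \<mu> = Max (range \<mu>)"

definition is_FTS :: "('a::finite \<Rightarrow> 'b::finite \<Rightarrow> ('a \<Rightarrow> real) set) \<Rightarrow> bool" where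
  "is_FTS \<delta> \<longleftrightarrow> (\<forall>s a. finite (\<delta> s a) \<and> (\<forall>\<mu>\<in>\<delta> s a. is_fuzzy \<mu>))"

definition pseudo_ultrametric :: "('a \<Rightarrow> 'a \<Rightarrow> real) \<Rightarrow> bool" where
  "pseudo_ultrametric d \<longleftrightarrow>
     (\<forall>s t. 0 \<le> d s t \<and> d s t \<le> 1) \<and> (\<forall>s. d s s = 0) \<and>
     (\<forall>s t. d s t = d t s) \<and> (\<forall>s t u. d s u \<le> max (d s t) (d t u))"

definition fz_coupling :: "('a::finite \<Rightarrow> real) \<Rightarrow> ('a \<Rightarrow> real) \<Rightarrow> ('a \<Rightarrow> 'a \<Rightarrow> real) \<Rightarrow> bool" where
  "fz_coupling \<mu> \<eta> x \<longleftrightarrow> (\<forall>u v. 0 \<le> x u v) \<and>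
     (\<forall>u. Max (range (\<lambda>v. x u v)) = \<mu> u) \<and> (\<forall>v. Max (range (\<lambda>u. x u v)) = \<eta> v)"

definition coupling_cost :: "('a::finite \<Rightarrow> 'a \<Rightarrow> real) \<Rightarrow> ('a \<Rightarrow> 'a \<Rightarrow> real) \<Rightarrow> real" where
  "coupling_cost d x = Max (range (\<lambda>(u, v). min (d u v) (x u v)))"

text \<open>Lifting of d to fuzzy sets (the minimum is attained; we write it as an infimum).\<close>
definition lift :: "('a::finite \<Rightarrow> 'a \<Rightarrow> real) \<Rightarrow> ('a \<Rightarrow> real) \<Rightarrow> ('a \<Rightarrow> real) \<Rightarrow> real" where
  "lift d \<mu> \<eta> = (if fz_height \<mu> \<noteq> fz_height \<eta> then 1
     else Inf {coupling_cost d x | x. fz_coupling \<mu> \<eta> x})"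

definition lift_set :: "('a::finite \<Rightarrow> 'a \<Rightarrow> real) \<Rightarrow> ('a \<Rightarrow> real) \<Rightarrow> ('a \<Rightarrow> real) set \<Rightarrow> real" where
  "lift_set d \<mu> Z = (if Z = {} then 1 else Min ((\<lambda>\<eta>. lift d \<mu> \<eta>) ` Z))"

text \<open>Hausdorff distance; a maximum over an empty set is read as 0 (all values are \<ge> 0).\<close>
definition hausdorff :: "('a::finite \<Rightarrow> 'a \<Rightarrow> real) \<Rightarrow> ('a \<Rightarrow> real) set \<Rightarrow> ('a \<Rightarrow> real) set \<Rightarrow> real" where
  "hausdorff d Y Z = (if Y = {} \<and> Z = {} then 0 else
     max (Max (insert 0 ((\<lambda>\<mu>. lift_set d \<mu> Z) ` Y)))
         (Max (insert 0 ((\<lambda>\<eta>. lift_set d \<eta> Y) ` Z))))"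

definition Delta :: "real \<Rightarrow> ('a::finite \<Rightarrow> 'b::finite \<Rightarrow> ('a \<Rightarrow> real) set) \<Rightarrow>
    ('a \<Rightarrow> 'a \<Rightarrow> real) \<Rightarrow> ('a \<Rightarrow> 'a \<Rightarrow> real)" where
  "Delta \<gamma> \<delta> d = (\<lambda>s t. \<gamma> * Max (range (\<lambda>a. hausdorff d (\<delta> s a) (\<delta> t a))))"

definition behav_dist :: "real \<Rightarrow> ('a::finite \<Rightarrow> 'b::finite \<Rightarrow> ('a \<Rightarrow> real) set) \<Rightarrow> ('a \<Rightarrow> 'a \<Rightarrow> real)" where
  "behav_dist \<gamma> \<delta> = (THE d. pseudo_ultrametric d \<and> Delta \<gamma> \<delta> d = d \<and>
      (\<forall>d'. pseudo_ultrametric d' \<and> Delta \<gamma> \<delta> d' = d' \<longrightarrow> (\<forall>s t. d s t \<le> d' s t)))"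

definition sup_norm :: "('a::finite \<Rightarrow> 'a \<Rightarrow> real) \<Rightarrow> real" where
  "sup_norm e = Max (range (\<lambda>(s, t). \<bar>e s t\<bar>))"

end

theory Submission
  imports Defs
begin

text \<open>\<open>Delta\<close> is a \<open>\<gamma>\<close>-contraction for the sup distance: each of the operations
  building it (maximum, minimum and infimum over a fixed index set, and the coupling cost)
  changes by at most \<open>c\<close> when \<open>d\<close> is perturbed pointwise by at most \<open>c\<close>.
  It also maps pseudo-ultrametrics to pseudo-ultrametrics, the ultrametric inequality for the
  lifting coming from the max-min composition of couplings. Hence, as in Banach's fixpoint
  theorem, the iterates \<open>Delta\<^sup>n(0)\<close> converge at rate \<open>\<gamma>\<^sup>n\<close> to a pseudo-ultrametric
  fixpoint, which is the only one and therefore the behavioural distance; finally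
  \<open>\<gamma>\<^sup>N \<le> \<epsilon>\<close> for \<open>N = \<lceil>log \<epsilon> / log \<gamma>\<rceil>\<close>.\<close>

lemma abs_Max_image_diff_le:
  fixes f g :: "'i \<Rightarrow> real"
  assumes "finite A" "A \<noteq> {}" "\<And>i. i \<in> A \<Longrightarrow> \<bar>f i - g i\<bar> \<le> c"
  shows "\<bar>Max (f ` A) - Max (g ` A)\<bar> \<le> c"
proof -
  have "Max (f ` A) \<in> f ` A" "Max (g ` A) \<in> g ` A" using assms(1,2) by simp_all
  then obtain i j where i: "i \<in> A" "Max (f ` A) = f i" and j: "j \<in> A" "Max (g ` A) = g j"
    by blast
  have "f j \<le> Max (f ` A)" "g i \<le> Max (g ` A)" using assms(1) i(1) j(1) by simp_all
  then show ?thesis using assms(3)[OF i(1)] assms(3)[OF j(1)] i j by (auto simp: abs_le_iff)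
qed

lemma abs_Min_image_diff_le:
  fixes f g :: "'i \<Rightarrow> real"
  assumes "finite A" "A \<noteq> {}" "\<And>i. i \<in> A \<Longrightarrow> \<bar>f i - g i\<bar> \<le> c"
  shows "\<bar>Min (f ` A) - Min (g ` A)\<bar> \<le> c"
proof -
  have "Min (f ` A) \<in> f ` A" "Min (g ` A) \<in> g ` A" using assms(1,2) by simp_all
  then obtain i j where i: "i \<in> A" "Min (f ` A) = f i" and j: "j \<in> A" "Min (g ` A) = g j"
    by blast
  have "Min (f ` A) \<le> f j" "Min (g ` A) \<le> g i" using assms(1) i(1) j(1) by simp_all
  then show ?thesis using assms(3)[OF i(1)] assms(3)[OF j(1)] i j by (auto simp: abs_le_iff)
qed

lemma abs_cInf_diff_le:
  fixes f g :: "'x \<Rightarrow> real"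
  assumes "\<And>x. P x \<Longrightarrow> \<bar>f x - g x\<bar> \<le> c" "0 \<le> c"
    and "bdd_below {f x |x. P x}" "bdd_below {g x |x. P x}"
  shows "\<bar>Inf {f x |x. P x} - Inf {g x |x. P x}\<bar> \<le> c"
proof (cases "\<exists>x. P x")
  case False
  then show ?thesis using assms(2) by simp
next
  case True
  have "Inf {f x |x. P x} - c \<le> Inf {g x |x. P x}" if "\<And>x. P x \<Longrightarrow> f x - c \<le> g x"
    and "bdd_below {f x |x. P x}" for f g :: "'x \<Rightarrow> real"
  proof (rule cInf_greatest)
    show "{g x |x. P x} \<noteq> {}" using True by auto
    fix y assume "y \<in> {g x |x. P x}"
    then obtain x where x: "P x" "y = g x" by auto
    then have "Inf {f x |x. P x} \<le> f x" using that(2) by (intro cInf_lower) auto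
    then show "Inf {f x |x. P x} - c \<le> y" using that(1)[OF x(1)] x(2) by linarith
  qed
  from this[of f g] this[of g f] show ?thesis
    using assms by (force simp: abs_le_iff)
qed

lemma abs_Max_insert_0_image_diff_le:
  fixes f g :: "'i \<Rightarrow> real"
  assumes "finite A" "\<And>i. i \<in> A \<Longrightarrow> \<bar>f i - g i\<bar> \<le> c" "0 \<le> c"
  shows "\<bar>Max (insert 0 (f ` A)) - Max (insert 0 (g ` A))\<bar> \<le> c"
proof (cases "A = {}")
  case False
  then have "\<bar>Max (f ` A) - Max (g ` A)\<bar> \<le> c"
    using assms(1,2) by (intro abs_Max_image_diff_le) auto
  moreover have "Max (insert 0 (h ` A)) = max 0 (Max (h ` A))" for h :: "'i \<Rightarrow> real"
    using False assms(1) by simp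
  ultimately show ?thesis by (simp add: abs_le_iff max_def)
qed (use assms(3) in simp)

lemma Max_range_eqI:
  fixes f :: "'i::finite \<Rightarrow> real"
  assumes "\<And>i. f i \<le> m" "m \<le> f j"
  shows "Max (range f) = m"
proof (rule antisym)
  show "Max (range f) \<le> m" using assms(1) by auto
  have "f j \<le> Max (range f)" by (rule Max_ge) auto
  then show "m \<le> Max (range f)" using assms(2) by linarith
qed

lemma le_max_cInf:
  fixes A B :: "real set"
  assumes "A \<noteq> {}" "B \<noteq> {}" "\<And>a b. a \<in> A \<Longrightarrow> b \<in> B \<Longrightarrow> c \<le> max a b"
  shows "c \<le> max (Inf A) (Inf B)"
proof (rule ccontr)
  assume "\<not> c \<le> max (Inf A) (Inf B)"
  then have "Inf A < c" "Inf B < c" by simp_all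
  then obtain a b where "a \<in> A" "a < c" "b \<in> B" "b < c"
    using cInf_lessD[OF assms(1), of c] cInf_lessD[OF assms(2), of c] by auto
  then show False using assms(3)[of a b] by simp
qed

section \<open>\<open>Delta\<close> is a contraction\<close>

lemma coupling_cost_ge: "min (d u v) (x u v) \<le> coupling_cost d x"
  unfolding coupling_cost_def by (rule Max_ge) auto

lemma bdd_below_coupling_costs: "bdd_below {coupling_cost d x |x. fz_coupling \<mu> \<eta> x}"
proof (rule bdd_belowI)
  fix y assume "y \<in> {coupling_cost d x |x. fz_coupling \<mu> \<eta> x}"
  then obtain x where "y = coupling_cost d x" "0 \<le> x undefined undefined"
    by (auto simp: fz_coupling_def)
  moreover have "min (d undefined undefined) (x undefined undefined) \<le> coupling_cost d x"
    by (rule coupling_cost_ge)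
  ultimately show "min (d undefined undefined) 0 \<le> y"
    by (auto simp: min_def split: if_split_asm)
qed

lemma abs_coupling_cost_diff_le:
  assumes "\<And>u v. \<bar>d u v - d' u v\<bar> \<le> c"
  shows "\<bar>coupling_cost d x - coupling_cost d' x\<bar> \<le> c"
  unfolding coupling_cost_def
proof (rule abs_Max_image_diff_le)
  fix p :: "'a \<times> 'a"
  show "\<bar>(case p of (u, v) \<Rightarrow> min (d u v) (x u v)) - (case p of (u, v) \<Rightarrow> min (d' u v) (x u v))\<bar> \<le> c"
    using assms[of "fst p" "snd p"] by (cases p) (auto simp: min_def abs_le_iff)
qed auto

lemma abs_lift_diff_le:
  assumes "\<And>u v. \<bar>d u v - d' u v\<bar> \<le> c"
  shows "\<bar>lift d \<mu> \<eta> - lift d' \<mu> \<eta>\<bar> \<le> c"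
proof -
  have "0 \<le> c" using assms[of undefined undefined] by linarith
  then show ?thesis
    unfolding lift_def
    using abs_cInf_diff_le[of "fz_coupling \<mu> \<eta>" "coupling_cost d" "coupling_cost d'" c]
    by (simp add: abs_coupling_cost_diff_le[OF assms] bdd_below_coupling_costs)
qed

lemma abs_lift_set_diff_le:
  assumes "finite Z" "\<And>u v. \<bar>d u v - d' u v\<bar> \<le> c"
  shows "\<bar>lift_set d \<mu> Z - lift_set d' \<mu> Z\<bar> \<le> c"
proof (cases "Z = {}")
  case True
  then show ?thesis using assms(2)[of undefined undefined] by (simp add: lift_set_def)
next
  case False
  then show ?thesis
    unfolding lift_set_def
    using abs_Min_image_diff_le[OF assms(1) False abs_lift_diff_le[OF assms(2)]] by simp
qed

lemma abs_hausdorff_diff_le: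
  assumes "finite Y" "finite Z" "\<And>u v. \<bar>d u v - d' u v\<bar> \<le> c"
  shows "\<bar>hausdorff d Y Z - hausdorff d' Y Z\<bar> \<le> c"
proof -
  have c: "0 \<le> c" using assms(3)[of undefined undefined] by linarith
  have "\<bar>Max (insert 0 ((\<lambda>\<mu>. lift_set d \<mu> Z) ` Y)) - Max (insert 0 ((\<lambda>\<mu>. lift_set d' \<mu> Z) ` Y))\<bar> \<le> c"
    "\<bar>Max (insert 0 ((\<lambda>\<mu>. lift_set d \<mu> Y) ` Z)) - Max (insert 0 ((\<lambda>\<mu>. lift_set d' \<mu> Y) ` Z))\<bar> \<le> c"
    using assms c by (auto intro!: abs_Max_insert_0_image_diff_le abs_lift_set_diff_le)
  then show ?thesis unfolding hausdorff_def using c by (auto simp: abs_le_iff max_def)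
qed

lemma abs_Delta_diff_le:
  assumes "is_FTS \<delta>" "0 \<le> \<gamma>" "\<And>u v. \<bar>d u v - d' u v\<bar> \<le> c"
  shows "\<bar>Delta \<gamma> \<delta> d s t - Delta \<gamma> \<delta> d' s t\<bar> \<le> \<gamma> * c"
proof -
  have "\<bar>Max (range (\<lambda>a. hausdorff d (\<delta> s a) (\<delta> t a)))
         - Max (range (\<lambda>a. hausdorff d' (\<delta> s a) (\<delta> t a)))\<bar> \<le> c"
    using assms(1,3) by (intro abs_Max_image_diff_le abs_hausdorff_diff_le) (auto simp: is_FTS_def)
  then show ?thesis
    unfolding Delta_def using assms(2)
    by (simp add: abs_mult right_diff_distrib[symmetric] mult_left_mono)
qed

section \<open>\<open>Delta\<close> preserves pseudo-ultrametrics\<close>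

lemma pseudo_ultrametricD:
  assumes "pseudo_ultrametric d"
  shows "0 \<le> d s t" "d s t \<le> 1" "d s s = 0" "d s t = d t s" "d s u \<le> max (d s t) (d t u)"
  using assms unfolding pseudo_ultrametric_def by blast+

lemma fz_height_ge: "\<mu> u \<le> fz_height \<mu>"
  unfolding fz_height_def by (rule Max_ge) auto

lemma fz_height_attained: "\<exists>u. \<mu> u = fz_height \<mu>"
proof -
  have "fz_height \<mu> \<in> range \<mu>" unfolding fz_height_def by (rule Max_in) auto
  then show ?thesis by auto
qed

lemma fz_coupling_le_left: "fz_coupling \<mu> \<eta> x \<Longrightarrow> x u v \<le> \<mu> u"
  unfolding fz_coupling_def using Max_ge[of "range (x u)" "x u v"] by auto

lemma fz_coupling_le_right: "fz_coupling \<mu> \<eta> x \<Longrightarrow> x u v \<le> \<eta> v"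
  unfolding fz_coupling_def using Max_ge[of "range (\<lambda>u. x u v)" "x u v"] by auto

lemma fz_coupling_attains_left: "fz_coupling \<mu> \<eta> x \<Longrightarrow> \<exists>v. x u v = \<mu> u"
  unfolding fz_coupling_def using Max_in[of "range (x u)"] by auto

lemma fz_coupling_attains_right: "fz_coupling \<mu> \<eta> x \<Longrightarrow> \<exists>u. x u v = \<eta> v"
  unfolding fz_coupling_def using Max_in[of "range (\<lambda>u. x u v)"] by auto

lemma fz_coupling_min:
  assumes "is_fuzzy \<mu>" "is_fuzzy \<eta>" "fz_height \<mu> = fz_height \<eta>"
  shows "fz_coupling \<mu> \<eta> (\<lambda>u v. min (\<mu> u) (\<eta> v))"
  unfolding fz_coupling_def
proof (intro conjI allI)
  fix u v
  show "0 \<le> min (\<mu> u) (\<eta> v)" using assms(1,2) by (auto simp: is_fuzzy_def)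
  obtain v' where "\<eta> v' = fz_height \<eta>" using fz_height_attained by blast
  then show "Max (range (\<lambda>v. min (\<mu> u) (\<eta> v))) = \<mu> u"
    using assms(3) fz_height_ge[of \<mu> u] by (intro Max_range_eqI[where j = v']) auto
  obtain u' where "\<mu> u' = fz_height \<mu>" using fz_height_attained by blast
  then show "Max (range (\<lambda>u. min (\<mu> u) (\<eta> v))) = \<eta> v"
    using assms(3) fz_height_ge[of \<eta> v] by (intro Max_range_eqI[where j = u']) auto
qed

lemma fz_coupling_diag:
  assumes "is_fuzzy \<mu>"
  shows "fz_coupling \<mu> \<mu> (\<lambda>u v. if u = v then \<mu> u else 0)"
  unfolding fz_coupling_def
proof (intro conjI allI)
  fix u v
  show "0 \<le> (if u = v then \<mu> u else 0)" using assms by (auto simp: is_fuzzy_def)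
  show "Max (range (\<lambda>v. if u = v then \<mu> u else 0)) = \<mu> u"
    using assms by (intro Max_range_eqI[where j = u]) (auto simp: is_fuzzy_def)
  show "Max (range (\<lambda>u. if u = v then \<mu> u else 0)) = \<mu> v"
    using assms by (intro Max_range_eqI[where j = v]) (auto simp: is_fuzzy_def)
qed

text \<open>The max-min composition of couplings, which plays the role of the gluing lemma.\<close>

definition coupling_comp :: "('a::finite \<Rightarrow> 'a \<Rightarrow> real) \<Rightarrow> ('a \<Rightarrow> 'a \<Rightarrow> real) \<Rightarrow> 'a \<Rightarrow> 'a \<Rightarrow> real"
  where "coupling_comp x y = (\<lambda>u w. Max (range (\<lambda>v. min (x u v) (y v w))))"

lemma coupling_comp_ge: "min (x u v) (y v w) \<le> coupling_comp x y u w"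
  unfolding coupling_comp_def by (rule Max_ge) auto

lemma coupling_comp_attained: "\<exists>v. coupling_comp x y u w = min (x u v) (y v w)"
proof -
  have "coupling_comp x y u w \<in> range (\<lambda>v. min (x u v) (y v w))"
    unfolding coupling_comp_def by (rule Max_in) auto
  then show ?thesis by auto
qed

lemma fz_coupling_comp:
  assumes x: "fz_coupling \<mu> \<eta> x" and y: "fz_coupling \<eta> \<zeta> y"
  shows "fz_coupling \<mu> \<zeta> (coupling_comp x y)"
  unfolding fz_coupling_def
proof (intro conjI allI)
  fix u w
  have "0 \<le> min (x u u) (y u w)" using x y by (simp add: fz_coupling_def)
  then show "0 \<le> coupling_comp x y u w" using coupling_comp_ge[of x u u y w] by linarith
  have le_\<mu>: "coupling_comp x y u w' \<le> \<mu> u" for w'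
    using coupling_comp_attained[of x y u w'] fz_coupling_le_left[OF x, of u] by (auto simp: min_le_iff_disj)
  have le_\<zeta>: "coupling_comp x y u' w \<le> \<zeta> w" for u'
    using coupling_comp_attained[of x y u' w] fz_coupling_le_right[OF y, of _ w] by (auto simp: min_le_iff_disj)
  obtain v1 where "x u v1 = \<mu> u" using fz_coupling_attains_left[OF x] by blast
  moreover obtain w1 where "y v1 w1 = \<eta> v1" using fz_coupling_attains_left[OF y] by blast
  ultimately have "\<mu> u \<le> coupling_comp x y u w1"
    using coupling_comp_ge[of x u v1 y w1] fz_coupling_le_right[OF x, of u v1] by linarith
  then show "Max (range (\<lambda>w. coupling_comp x y u w)) = \<mu> u"
    using le_\<mu> by (intro Max_range_eqI[where j = w1])
  obtain v2 where "y v2 w = \<zeta> w" using fz_coupling_attains_right[OF y] by blast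
  moreover obtain u2 where "x u2 v2 = \<eta> v2" using fz_coupling_attains_right[OF x] by blast
  ultimately have "\<zeta> w \<le> coupling_comp x y u2 w"
    using coupling_comp_ge[of x u2 v2 y w] fz_coupling_le_left[OF y, of v2 w] by linarith
  then show "Max (range (\<lambda>u. coupling_comp x y u w)) = \<zeta> w"
    using le_\<zeta> by (intro Max_range_eqI[where j = u2])
qed

lemma coupling_cost_nonneg:
  assumes "pseudo_ultrametric d" "fz_coupling \<mu> \<eta> x"
  shows "0 \<le> coupling_cost d x"
proof -
  have "0 \<le> min (d u v) (x u v)" for u v
    using assms by (simp add: fz_coupling_def pseudo_ultrametricD(1))
  then show ?thesis using coupling_cost_ge order_trans by blast
qed

lemma coupling_cost_le_1: "pseudo_ultrametric d \<Longrightarrow> coupling_cost d x \<le> 1"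
  unfolding coupling_cost_def by (auto simp: min_le_iff_disj dest: pseudo_ultrametricD(2))

lemma coupling_cost_comp_le:
  assumes "pseudo_ultrametric d"
  shows "coupling_cost d (coupling_comp x y) \<le> max (coupling_cost d x) (coupling_cost d y)"
proof -
  have "min (d u w) (coupling_comp x y u w) \<le> max (coupling_cost d x) (coupling_cost d y)" for u w
  proof -
    obtain v where "coupling_comp x y u w = min (x u v) (y v w)"
      using coupling_comp_attained by blast
    moreover have "d u w \<le> max (d u v) (d v w)" by (rule pseudo_ultrametricD(5)[OF assms])
    moreover have "min (d u v) (x u v) \<le> coupling_cost d x" "min (d v w) (y v w) \<le> coupling_cost d y"
      by (rule coupling_cost_ge)+
    ultimately show ?thesis by (auto simp: min_def max_def split: if_splits)
  qed
  then show ?thesis unfolding coupling_cost_def[of d "coupling_comp x y"] by auto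
qed

lemma lift_nonneg:
  assumes "pseudo_ultrametric d" "is_fuzzy \<mu>" "is_fuzzy \<eta>"
  shows "0 \<le> lift d \<mu> \<eta>"
proof (cases "fz_height \<mu> = fz_height \<eta>")
  case True
  then have "{coupling_cost d x |x. fz_coupling \<mu> \<eta> x} \<noteq> {}"
    using fz_coupling_min[OF assms(2,3)] by blast
  then have "0 \<le> Inf {coupling_cost d x |x. fz_coupling \<mu> \<eta> x}"
    by (rule cInf_greatest) (auto intro: coupling_cost_nonneg[OF assms(1)])
  then show ?thesis by (simp add: lift_def)
qed (simp add: lift_def)

lemma lift_le_1:
  assumes "pseudo_ultrametric d" "is_fuzzy \<mu>" "is_fuzzy \<eta>"
  shows "lift d \<mu> \<eta> \<le> 1"
proof (cases "fz_height \<mu> = fz_height \<eta>")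
  case True
  let ?x = "\<lambda>u v. min (\<mu> u) (\<eta> v)"
  have "Inf {coupling_cost d x |x. fz_coupling \<mu> \<eta> x} \<le> coupling_cost d ?x"
    using fz_coupling_min[OF assms(2,3) True] by (intro cInf_lower bdd_below_coupling_costs) auto
  then show ?thesis using True coupling_cost_le_1[OF assms(1), of ?x] by (simp add: lift_def)
qed (simp add: lift_def)

lemma lift_self:
  assumes "pseudo_ultrametric d" "is_fuzzy \<mu>"
  shows "lift d \<mu> \<mu> = 0"
proof -
  let ?x = "\<lambda>u v. if u = v then \<mu> u else 0"
  have "min (d u v) (?x u v) = 0" for u v
    using assms by (auto simp: is_fuzzy_def pseudo_ultrametricD(1,3))
  then have "coupling_cost d ?x = 0" unfolding coupling_cost_def
    by (intro Max_range_eqI[where j = "(undefined, undefined)"]) (auto simp del: min_def)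
  moreover have "Inf {coupling_cost d x |x. fz_coupling \<mu> \<mu> x} \<le> coupling_cost d ?x"
    using fz_coupling_diag[OF assms(2)] by (intro cInf_lower bdd_below_coupling_costs) auto
  ultimately show ?thesis using lift_nonneg[OF assms(1,2,2)] by (simp add: lift_def)
qed

lemma lift_ultra:
  assumes d: "pseudo_ultrametric d" and fz: "is_fuzzy \<mu>" "is_fuzzy \<eta>" "is_fuzzy \<zeta>"
  shows "lift d \<mu> \<zeta> \<le> max (lift d \<mu> \<eta>) (lift d \<eta> \<zeta>)"
proof (cases "fz_height \<mu> = fz_height \<eta> \<and> fz_height \<eta> = fz_height \<zeta>")
  case False
  then show ?thesis
    using lift_le_1[OF d fz(1,3)] by (auto simp: lift_def)
next
  case True
  let ?costs = "\<lambda>\<mu> \<eta>. {coupling_cost d x |x. fz_coupling \<mu> \<eta> x}"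
  have "Inf (?costs \<mu> \<zeta>) \<le> max (Inf (?costs \<mu> \<eta>)) (Inf (?costs \<eta> \<zeta>))"
  proof (rule le_max_cInf)
    show "?costs \<mu> \<eta> \<noteq> {}" "?costs \<eta> \<zeta> \<noteq> {}"
      using fz_coupling_min fz True by blast+
    fix a b assume "a \<in> ?costs \<mu> \<eta>" "b \<in> ?costs \<eta> \<zeta>"
    then obtain x y where "a = coupling_cost d x" "fz_coupling \<mu> \<eta> x"
      and "b = coupling_cost d y" "fz_coupling \<eta> \<zeta> y" by blast
    moreover from this have "Inf (?costs \<mu> \<zeta>) \<le> coupling_cost d (coupling_comp x y)"
      by (intro cInf_lower bdd_below_coupling_costs) (blast intro: fz_coupling_comp)
    ultimately show "Inf (?costs \<mu> \<zeta>) \<le> max a b"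
      using coupling_cost_comp_le[OF d, of x y] by linarith
  qed
  then show ?thesis using True unfolding lift_def by simp
qed

lemma lift_set_le_lift: "finite Z \<Longrightarrow> \<eta> \<in> Z \<Longrightarrow> lift_set d \<mu> Z \<le> lift d \<mu> \<eta>"
  unfolding lift_set_def by auto

lemma lift_set_attained:
  assumes "finite Z" "Z \<noteq> {}"
  shows "\<exists>\<eta>\<in>Z. lift_set d \<mu> Z = lift d \<mu> \<eta>"
proof -
  have "Min (lift d \<mu> ` Z) \<in> lift d \<mu> ` Z" using assms by simp
  then show ?thesis using assms(2) unfolding lift_set_def by auto
qed

lemma lift_set_le_1:
  assumes "pseudo_ultrametric d" "finite Z" "\<forall>\<eta>\<in>Z. is_fuzzy \<eta>" "is_fuzzy \<mu>"
  shows "lift_set d \<mu> Z \<le> 1"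
proof (cases "Z = {}")
  case False
  then show ?thesis using lift_set_attained[OF assms(2)] lift_le_1[OF assms(1,4)] assms(3) by metis
qed (simp add: lift_set_def)

lemma hausdorff_commute: "hausdorff d Y Z = hausdorff d Z Y"
  unfolding hausdorff_def by (auto simp: max.commute)

lemma lift_set_le_hausdorff:
  assumes "finite Y" "\<mu> \<in> Y"
  shows "lift_set d \<mu> Z \<le> hausdorff d Y Z"
proof -
  have "lift_set d \<mu> Z \<le> Max (insert 0 ((\<lambda>\<mu>. lift_set d \<mu> Z) ` Y))"
    using assms by simp
  then show ?thesis using assms(2) unfolding hausdorff_def by auto
qed

lemma hausdorff_le:
  assumes "finite Y" "finite Z" "0 \<le> m"
    and "\<forall>\<mu>\<in>Y. lift_set d \<mu> Z \<le> m" "\<forall>\<eta>\<in>Z. lift_set d \<eta> Y \<le> m"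
  shows "hausdorff d Y Z \<le> m"
  unfolding hausdorff_def using assms by auto

lemma hausdorff_nonneg:
  assumes "finite Y"
  shows "0 \<le> hausdorff d Y Z"
proof -
  have "0 \<le> Max (insert 0 ((\<lambda>\<mu>. lift_set d \<mu> Z) ` Y))" using assms by simp
  then show ?thesis by (simp add: hausdorff_def le_max_iff_disj)
qed

lemma hausdorff_le_1:
  assumes "pseudo_ultrametric d" "finite Y" "finite Z" "\<forall>\<mu>\<in>Y. is_fuzzy \<mu>" "\<forall>\<eta>\<in>Z. is_fuzzy \<eta>"
  shows "hausdorff d Y Z \<le> 1"
  using assms by (intro hausdorff_le) (auto intro: lift_set_le_1)

lemma hausdorff_self:
  assumes "pseudo_ultrametric d" "finite Y" "\<forall>\<mu>\<in>Y. is_fuzzy \<mu>"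
  shows "hausdorff d Y Y = 0"
proof -
  have "lift_set d \<mu> Y \<le> 0" if "\<mu> \<in> Y" for \<mu>
    using lift_set_le_lift[OF assms(2) that, of d \<mu>] lift_self[OF assms(1)] assms(3) that by simp
  then have "hausdorff d Y Y \<le> 0" using assms(2) by (intro hausdorff_le) auto
  then show ?thesis using hausdorff_nonneg[OF assms(2), of d Y] by linarith
qed

lemma lift_set_le_max_hausdorff:
  assumes d: "pseudo_ultrametric d" and fin: "finite X" "finite Y" "finite W"
    and fz: "\<forall>\<mu>\<in>X. is_fuzzy \<mu>" "\<forall>\<mu>\<in>Y. is_fuzzy \<mu>" "\<forall>\<mu>\<in>W. is_fuzzy \<mu>"
    and "\<mu> \<in> X"
  shows "lift_set d \<mu> W \<le> max (hausdorff d X Y) (hausdorff d Y W)"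
proof -
  have "lift_set d \<mu> W \<le> 1" using lift_set_le_1[OF d fin(3) fz(3)] fz(1) \<open>\<mu> \<in> X\<close> by blast
  show ?thesis
  proof (cases "Y = {}")
    case True
    then have "1 \<le> hausdorff d X Y"
      using lift_set_le_hausdorff[OF fin(1) \<open>\<mu> \<in> X\<close>, of d Y] by (simp add: lift_set_def)
    then show ?thesis using \<open>lift_set d \<mu> W \<le> 1\<close> by linarith
  next
    case False
    then obtain \<eta> where \<eta>: "\<eta> \<in> Y" "lift d \<mu> \<eta> \<le> hausdorff d X Y"
      using lift_set_attained[OF fin(2)] lift_set_le_hausdorff[OF fin(1) \<open>\<mu> \<in> X\<close>] by metis
    show ?thesis
    proof (cases "W = {}")
      case True
      then have "1 \<le> hausdorff d Y W"
        using lift_set_le_hausdorff[OF fin(2) \<eta>(1), of d W] by (simp add: lift_set_def)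
      then show ?thesis using \<open>lift_set d \<mu> W \<le> 1\<close> by linarith
    next
      case False
      then obtain \<zeta> where \<zeta>: "\<zeta> \<in> W" "lift d \<eta> \<zeta> \<le> hausdorff d Y W"
        using lift_set_attained[OF fin(3)] lift_set_le_hausdorff[OF fin(2) \<eta>(1)] by metis
      have "lift_set d \<mu> W \<le> lift d \<mu> \<zeta>" by (rule lift_set_le_lift[OF fin(3) \<zeta>(1)])
      also have "\<dots> \<le> max (lift d \<mu> \<eta>) (lift d \<eta> \<zeta>)"
        using lift_ultra[OF d] fz \<open>\<mu> \<in> X\<close> \<eta>(1) \<zeta>(1) by blast
      finally show ?thesis using \<eta>(2) \<zeta>(2) by linarith
    qed
  qed
qed

lemma hausdorff_ultra:
  assumes d: "pseudo_ultrametric d" and fin: "finite X" "finite Y" "finite W"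
    and fz: "\<forall>\<mu>\<in>X. is_fuzzy \<mu>" "\<forall>\<mu>\<in>Y. is_fuzzy \<mu>" "\<forall>\<mu>\<in>W. is_fuzzy \<mu>"
  shows "hausdorff d X W \<le> max (hausdorff d X Y) (hausdorff d Y W)"
proof (rule hausdorff_le[OF fin(1,3)])
  show "0 \<le> max (hausdorff d X Y) (hausdorff d Y W)"
    using hausdorff_nonneg[OF fin(1)] by (simp add: le_max_iff_disj)
  show "\<forall>\<mu>\<in>X. lift_set d \<mu> W \<le> max (hausdorff d X Y) (hausdorff d Y W)"
    using lift_set_le_max_hausdorff[OF d fin fz] by blast
  show "\<forall>\<eta>\<in>W. lift_set d \<eta> X \<le> max (hausdorff d X Y) (hausdorff d Y W)"
    using lift_set_le_max_hausdorff[OF d fin(3,2,1) fz(3,2,1)]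
      hausdorff_commute[of d W Y] hausdorff_commute[of d Y X] by (simp add: max.commute)
qed

lemma pseudo_ultrametric_Delta:
  assumes F: "is_FTS \<delta>" and "0 \<le> \<gamma>" "\<gamma> \<le> 1" and d: "pseudo_ultrametric d"
  shows "pseudo_ultrametric (Delta \<gamma> \<delta> d)"
proof -
  define H where "H s t = Max (range (\<lambda>a. hausdorff d (\<delta> s a) (\<delta> t a)))" for s t
  have fin: "finite (\<delta> s a)" and fz: "\<forall>\<mu>\<in>\<delta> s a. is_fuzzy \<mu>" for s a
    using F by (simp_all add: is_FTS_def)
  have nonneg: "0 \<le> H s t" for s t
    unfolding H_def using hausdorff_nonneg[OF fin] by (simp add: Max_ge_iff)
  have le_1: "H s t \<le> 1" for s t
    unfolding H_def using hausdorff_le_1[OF d fin fin fz fz] by simp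
  have refl: "H s s = 0" for s
    unfolding H_def using hausdorff_self[OF d fin fz] by simp
  have sym: "H s t = H t s" for s t
    unfolding H_def by (simp add: hausdorff_commute[of d "\<delta> s _"])
  have ultra: "H s u \<le> max (H s t) (H t u)" for s t u
  proof -
    have "hausdorff d (\<delta> s a) (\<delta> t a) \<le> H s t" "hausdorff d (\<delta> t a) (\<delta> u a) \<le> H t u" for a
      unfolding H_def by simp_all
    then have "hausdorff d (\<delta> s a) (\<delta> u a) \<le> max (H s t) (H t u)" for a
      using hausdorff_ultra[OF d fin[of s a] fin[of t a] fin[of u a] fz fz fz] by (meson max.mono order_trans)
    then show ?thesis unfolding H_def[of s u] by simp
  qed
  show ?thesis
    unfolding pseudo_ultrametric_def Delta_def H_def[symmetric]
  proof (intro conjI allI)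
    fix s t u
    show "0 \<le> \<gamma> * H s t" "\<gamma> * H s t \<le> 1" "\<gamma> * H s s = 0" "\<gamma> * H s t = \<gamma> * H t s"
      using nonneg[of s t] le_1[of s t] refl[of s] sym[of s t] assms(2,3) by (simp_all add: mult_le_one)
    show "\<gamma> * H s u \<le> max (\<gamma> * H s t) (\<gamma> * H t u)"
      using mult_left_mono[OF ultra \<open>0 \<le> \<gamma>\<close>] \<open>0 \<le> \<gamma>\<close> by (simp add: max_mult_distrib_left)
  qed
qed

section \<open>Convergence of the iterates\<close>

lemma abs_Delta_power_diff_le:
  assumes "is_FTS \<delta>" "0 \<le> \<gamma>" "\<And>u v. \<bar>d u v - d' u v\<bar> \<le> c"
  shows "\<bar>(Delta \<gamma> \<delta> ^^ n) d s t - (Delta \<gamma> \<delta> ^^ n) d' s t\<bar> \<le> \<gamma> ^ n * c"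
proof (induction n arbitrary: s t)
  case 0
  then show ?case using assms(3) by simp
next
  case (Suc n)
  then show ?case
    using abs_Delta_diff_le[OF assms(1,2), of "(Delta \<gamma> \<delta> ^^ n) d" "(Delta \<gamma> \<delta> ^^ n) d'"]
    by (simp add: mult.assoc)
qed

lemma pseudo_ultrametric_abs_diff_le_1:
  assumes "pseudo_ultrametric d" "pseudo_ultrametric d'"
  shows "\<bar>d u v - d' u v\<bar> \<le> 1"
  using pseudo_ultrametricD(1,2)[OF assms(1), of u v] pseudo_ultrametricD(1,2)[OF assms(2), of u v]
  by (simp add: abs_le_iff)

lemma pseudo_ultrametric_zero: "pseudo_ultrametric (\<lambda>_ _. 0)"
  by (simp add: pseudo_ultrametric_def)

lemma pseudo_ultrametric_Delta_power:
  assumes "is_FTS \<delta>" "0 \<le> \<gamma>" "\<gamma> \<le> 1" "pseudo_ultrametric d"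
  shows "pseudo_ultrametric ((Delta \<gamma> \<delta> ^^ n) d)"
  by (induction n) (simp_all add: assms pseudo_ultrametric_Delta)

lemma pseudo_ultrametric_limit:
  assumes "\<And>s t. (\<lambda>n. D n s t) \<longlonglongrightarrow> d s t" "\<And>n. pseudo_ultrametric (D n)"
  shows "pseudo_ultrametric d"
  unfolding pseudo_ultrametric_def
proof (intro conjI allI)
  fix s t u
  show "0 \<le> d s t" by (rule LIMSEQ_le_const[OF assms(1)]) (simp add: pseudo_ultrametricD(1)[OF assms(2)])
  show "d s t \<le> 1" by (rule LIMSEQ_le_const2[OF assms(1)]) (simp add: pseudo_ultrametricD(2)[OF assms(2)])
  show "d s s = 0" using LIMSEQ_unique[OF assms(1)[of s s]] by (simp add: pseudo_ultrametricD(3)[OF assms(2)])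
  show "d s t = d t s" using LIMSEQ_unique[OF assms(1)[of s t]] assms(1)[of t s]
    by (simp add: pseudo_ultrametricD(4)[OF assms(2), of _ s t])
  show "d s u \<le> max (d s t) (d t u)"
    by (rule LIMSEQ_le[OF assms(1) tendsto_max[OF assms(1) assms(1)]])
      (simp add: pseudo_ultrametricD(5)[OF assms(2)])
qed

lemma convergent_with_rate_if_tail_le_power:
  fixes X :: "nat \<Rightarrow> real"
  assumes "0 \<le> \<gamma>" "\<gamma> < 1" "\<And>n k. \<bar>X (n + k) - X n\<bar> \<le> \<gamma> ^ n"
  obtains L where "X \<longlonglongrightarrow> L" "\<And>n. \<bar>X n - L\<bar> \<le> \<gamma> ^ n"
proof -
  have "Cauchy X"
  proof (rule CauchyI)
    fix e :: real assume "0 < e"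
    then obtain M where M: "\<gamma> ^ M < e / 2" using real_arch_pow_inv[of "e / 2" \<gamma>] assms(2) by auto
    have "\<bar>X m - X n\<bar> < e" if "M \<le> m" "M \<le> n" for m n
      using assms(3)[of M "m - M"] assms(3)[of M "n - M"] that M by simp
    then show "\<exists>M. \<forall>m\<ge>M. \<forall>n\<ge>M. norm (X m - X n) < e" by auto
  qed
  then obtain L where L: "X \<longlonglongrightarrow> L" by (auto simp: Cauchy_convergent_iff convergent_def)
  have "\<bar>X n - L\<bar> \<le> \<gamma> ^ n" for n
  proof -
    have "(\<lambda>k. \<bar>X (k + n) - X n\<bar>) \<longlonglongrightarrow> \<bar>L - X n\<bar>"
      by (intro tendsto_intros LIMSEQ_ignore_initial_segment[OF L])
    then have "\<bar>L - X n\<bar> \<le> \<gamma> ^ n"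
      by (rule LIMSEQ_le_const2) (metis add.commute assms(3))
    then show ?thesis by (simp add: abs_minus_commute)
  qed
  with L that show ?thesis by blast
qed

lemma eq_if_abs_diff_le_power:
  fixes x y :: real
  assumes "0 \<le> \<gamma>" "\<gamma> < 1" "\<And>n. \<bar>x - y\<bar> \<le> c * \<gamma> ^ n"
  shows "x = y"
proof -
  have "(\<lambda>n. c * \<gamma> ^ n) \<longlonglongrightarrow> 0"
    using assms(1,2) by (intro tendsto_mult_right_zero LIMSEQ_power_zero) simp
  then have "\<bar>x - y\<bar> \<le> 0" by (rule LIMSEQ_le_const) (use assms(3) in blast)
  then show ?thesis by simp
qed

lemma Delta_fixpoint_unique:
  assumes "is_FTS \<delta>" "0 \<le> \<gamma>" "\<gamma> < 1"
    and "pseudo_ultrametric d" "Delta \<gamma> \<delta> d = d" "pseudo_ultrametric d'" "Delta \<gamma> \<delta> d' = d'"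
  shows "d = d'"
proof (intro ext)
  fix s t
  have "(Delta \<gamma> \<delta> ^^ n) d = d" "(Delta \<gamma> \<delta> ^^ n) d' = d'" for n
    by (induction n) (simp_all add: assms(5,7))
  moreover have "\<bar>d u v - d' u v\<bar> \<le> 1" for u v
    using assms(4,6) by (rule pseudo_ultrametric_abs_diff_le_1)
  ultimately have "\<bar>d s t - d' s t\<bar> \<le> 1 * \<gamma> ^ n" for n
    using abs_Delta_power_diff_le[OF assms(1,2), of d d' 1 n s t] by simp
  with assms(2,3) show "d s t = d' s t" by (rule eq_if_abs_diff_le_power)
qed

lemma behav_dist_eqI:
  assumes "is_FTS \<delta>" "0 \<le> \<gamma>" "\<gamma> < 1" "pseudo_ultrametric d" "Delta \<gamma> \<delta> d = d"
  shows "behav_dist \<gamma> \<delta> = d"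
  unfolding behav_dist_def
  using Delta_fixpoint_unique[OF assms(1-3)] assms(4,5) by (intro the_equality) auto

lemma Delta_iterates_converge:
  assumes F: "is_FTS \<delta>" and "0 \<le> \<gamma>" "\<gamma> < 1"
  obtains d where "pseudo_ultrametric d" "Delta \<gamma> \<delta> d = d"
    "\<And>n s t. \<bar>(Delta \<gamma> \<delta> ^^ n) (\<lambda>_ _. 0) s t - d s t\<bar> \<le> \<gamma> ^ n"
proof -
  define D where "D n = (Delta \<gamma> \<delta> ^^ n) (\<lambda>_ _. 0)" for n
  have pum: "pseudo_ultrametric (D n)" for n
    unfolding D_def using assms by (intro pseudo_ultrametric_Delta_power pseudo_ultrametric_zero) auto
  have "\<bar>D (n + k) s t - D n s t\<bar> \<le> \<gamma> ^ n" for n k s t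
  proof -
    have "\<bar>D k u v - 0\<bar> \<le> 1" for u v
      using pum pseudo_ultrametric_zero by (rule pseudo_ultrametric_abs_diff_le_1)
    then show ?thesis
      using abs_Delta_power_diff_le[OF F \<open>0 \<le> \<gamma>\<close>, of "D k" "\<lambda>_ _. 0" 1 n s t]
      by (simp add: D_def funpow_add)
  qed
  then have "\<exists>L. (\<lambda>n. D n s t) \<longlonglongrightarrow> L \<and> (\<forall>n. \<bar>D n s t - L\<bar> \<le> \<gamma> ^ n)" for s t
    using convergent_with_rate_if_tail_le_power[OF assms(2,3)] by metis
  then obtain d where lim: "\<And>s t. (\<lambda>n. D n s t) \<longlonglongrightarrow> d s t"
    and rate: "\<And>n s t. \<bar>D n s t - d s t\<bar> \<le> \<gamma> ^ n" by metis
  have "Delta \<gamma> \<delta> d s t = d s t" for s t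
  proof (rule eq_if_abs_diff_le_power[OF assms(2,3)])
    fix n
    have "\<bar>Delta \<gamma> \<delta> d s t - D (Suc n) s t\<bar> \<le> \<gamma> * \<gamma> ^ n"
      using abs_Delta_diff_le[OF F \<open>0 \<le> \<gamma>\<close>, of d "D n" "\<gamma> ^ n"] rate by (simp add: D_def abs_minus_commute)
    moreover have "\<gamma> * \<gamma> ^ n \<le> \<gamma> ^ n" using assms(2,3) by (simp add: mult_left_le_one_le)
    ultimately show "\<bar>Delta \<gamma> \<delta> d s t - d s t\<bar> \<le> 2 * \<gamma> ^ n"
      using rate[of "Suc n" s t] by (simp add: abs_le_iff)
  qed
  then show ?thesis
    using that pseudo_ultrametric_limit[OF lim pum] rate unfolding D_def by blast
qed

lemma power_nat_ceiling_log_le: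
  fixes \<gamma> \<epsilon> :: real
  assumes "0 < \<gamma>" "\<gamma> < 1" "0 < \<epsilon>" "\<epsilon> \<le> 1"
  shows "\<gamma> ^ nat \<lceil>ln \<epsilon> / ln \<gamma>\<rceil> \<le> \<epsilon>"
proof -
  let ?N = "nat \<lceil>ln \<epsilon> / ln \<gamma>\<rceil>"
  have "ln \<gamma> < 0" "ln \<epsilon> \<le> 0" using assms by simp_all
  then have "ln \<epsilon> / ln \<gamma> \<le> real ?N" by (simp add: divide_nonpos_neg real_nat_ceiling_ge)
  then have "ln (\<gamma> ^ ?N) \<le> ln \<epsilon>" using \<open>ln \<gamma> < 0\<close> assms(1) by (simp add: ln_realpow divide_le_eq)
  then show ?thesis using assms(1,3) by simp
qed

lemma sup_norm_le: "(\<And>s t. \<bar>e s t\<bar> \<le> c) \<Longrightarrow> sup_norm e \<le> c"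
  unfolding sup_norm_def by auto

theorem theorem2:
  fixes \<delta> :: "'a::finite \<Rightarrow> 'b::finite \<Rightarrow> ('a \<Rightarrow> real) set"
    and \<gamma> \<epsilon> :: real
  assumes "is_FTS \<delta>"
    and "0 < \<gamma>" and "\<gamma> < 1"
    and "0 < \<epsilon>" and "\<epsilon> \<le> 1"
  shows "sup_norm (\<lambda>s t. ((Delta \<gamma> \<delta> ^^ nat \<lceil>ln \<epsilon> / ln \<gamma>\<rceil>) (\<lambda>_ _. 0)) s t
                          - behav_dist \<gamma> \<delta> s t) \<le> \<epsilon>"
proof -
  let ?N = "nat \<lceil>ln \<epsilon> / ln \<gamma>\<rceil>"
  obtain d where d: "pseudo_ultrametric d" "Delta \<gamma> \<delta> d = d"
    and rate: "\<And>n s t. \<bar>(Delta \<gamma> \<delta> ^^ n) (\<lambda>_ _. 0) s t - d s t\<bar> \<le> \<gamma> ^ n"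
    using Delta_iterates_converge[OF assms(1) less_imp_le[OF assms(2)] assms(3)] by blast
  have "behav_dist \<gamma> \<delta> = d" using behav_dist_eqI[OF assms(1) _ assms(3) d] assms(2) by simp
  moreover have "\<gamma> ^ ?N \<le> \<epsilon>" using power_nat_ceiling_log_le assms(2-5) by blast
  ultimately show ?thesis using rate[of ?N] order_trans by (intro sup_norm_le) fastforce
qed

end
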